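(* Let $E$ be a real Banach space and $F\subseteq E$ a closed subspace which is the range of a linear projection $P:E\to F$ with $\|P\|\le1$. Then: (i) $FBL[F]$ is isometrically order isomorphic to a closed sublattice of $FBL[E]$; (ii) $FBL[F]^*$ is isometrically order isomorphic to a $w^*$-closed band of $FBL[E]^*$.
   Context: For a real Banach space $E$ with dual $E^*$ and closed unit ball $B_E$, let $H[E]$ be the vector space of all positively homogeneous functions $f:E^*\to\mathbb R$ ($f(\lambda x^* )=\lambda f(x^* )$ for $\lambda>0$). For $f\in H[E]$ put $\|f\|_{FBL[E]}:=\sup\{\sum_{k=1}^n|f(x_k^* )| : n\in\mathbb N,\ x_1^*,\dots,x_n^*\in E^*,\ \sup_{x\in B_E}\sum_{k=1}^n|x_k^*(x)|\le 1\}$. $H_0[E]:=\{f\in H[E]:\|f\|_{FBL[E]}<\infty\}$ is a Banach lattice with this norm and pointwise order/operations. For $x\in E$ let $\delta_x(x^* )=x^*(x)$. $FBL[E]$ is the closed sublattice of $H_0[E]$ generated by $\{\delta_x:x\in E\}$; $FBL[F]$ is defined likewise for the Banach space $F$. *)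

theory Defs
  imports "HOL-Analysis.Analysis"
begin

text \<open>The dual E* of a real normed space
  of type 'a is the type of bounded linear functionals on 'a (blinfun).
  Elements of H[E] are real-valued functions on E*.\<close>

type_synonym 'a fblfun = "('a \<Rightarrow>\<^sub>L real) \<Rightarrow> real"

definition pos_homogeneous :: "'a::real_normed_vector fblfun \<Rightarrow> bool" where
  "pos_homogeneous f \<longleftrightarrow> (\<forall>xs (t::real). t > 0 \<longrightarrow> f (t *\<^sub>R xs) = t * f xs)"

definition fbl_sums :: "'a::real_normed_vector fblfun \<Rightarrow> real set" where
  "fbl_sums f = {(\<Sum>k<n. \<bar>f (xs k)\<bar>) | (n::nat) xs.
      \<forall>x. norm x \<le> 1 \<longrightarrow> (\<Sum>k<n. \<bar>blinfun_apply (xs k) x\<bar>) \<le> 1}"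

definition fbl_norm :: "'a::real_normed_vector fblfun \<Rightarrow> real" where
  "fbl_norm f = Sup (fbl_sums f)"

definition H0 :: "'a::real_normed_vector fblfun set" where
  "H0 = {f. pos_homogeneous f \<and> bdd_above (fbl_sums f)}"

definition fbl_delta :: "'a::real_normed_vector \<Rightarrow> 'a fblfun" where
  "fbl_delta x = (\<lambda>xs. blinfun_apply xs x)"

definition closed_sublattice_of :: "'a::real_normed_vector fblfun set \<Rightarrow> 'a fblfun set \<Rightarrow> bool" where
  "closed_sublattice_of Y S \<longleftrightarrow> S \<subseteq> Y \<and> S \<noteq> {} \<and>
     (\<forall>f\<in>S. \<forall>g\<in>S. (\<lambda>xs. f xs + g xs) \<in> S) \<and>
     (\<forall>c::real. \<forall>f\<in>S. (\<lambda>xs. c * f xs) \<in> S) \<and>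
     (\<forall>f\<in>S. \<forall>g\<in>S. (\<lambda>xs. max (f xs) (g xs)) \<in> S) \<and>
     (\<forall>f\<in>Y. (\<forall>\<epsilon>>0. \<exists>g\<in>S. fbl_norm (\<lambda>xs. f xs - g xs) < \<epsilon>) \<longrightarrow> f \<in> S)"

definition FBL :: "'a::real_normed_vector fblfun set" where
  "FBL = \<Inter> {S. closed_sublattice_of H0 S \<and> range fbl_delta \<subseteq> S}"

text \<open>Topological dual of FBL[E]: bounded linear functionals on FBL[E], represented
  canonically as functions vanishing outside FBL[E].\<close>
definition FBL_dual :: "('a::real_normed_vector fblfun \<Rightarrow> real) set" where
  "FBL_dual = {\<phi>. (\<forall>f\<in>FBL. \<forall>g\<in>FBL. \<phi> (\<lambda>xs. f xs + g xs) = \<phi> f + \<phi> g) \<and>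
                  (\<forall>c. \<forall>f\<in>FBL. \<phi> (\<lambda>xs. c * f xs) = c * \<phi> f) \<and>
                  (\<exists>C. \<forall>f\<in>FBL. \<bar>\<phi> f\<bar> \<le> C * fbl_norm f) \<and>
                  (\<forall>f. f \<notin> FBL \<longrightarrow> \<phi> f = 0)}"

definition dual_norm :: "('a::real_normed_vector fblfun \<Rightarrow> real) \<Rightarrow> real" where
  "dual_norm \<phi> = Sup {\<bar>\<phi> f\<bar> | f. f \<in> FBL \<and> fbl_norm f \<le> 1}"

definition dual_le :: "('a::real_normed_vector fblfun \<Rightarrow> real) \<Rightarrow> ('a fblfun \<Rightarrow> real) \<Rightarrow> bool" where
  "dual_le \<phi> \<psi> \<longleftrightarrow> (\<forall>f\<in>FBL. (\<forall>xs. 0 \<le> f xs) \<longrightarrow> \<phi> f \<le> \<psi> f)"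

definition dual_is_sup :: "('a::real_normed_vector fblfun \<Rightarrow> real) set \<Rightarrow> ('a fblfun \<Rightarrow> real) \<Rightarrow> bool" where
  "dual_is_sup A s \<longleftrightarrow> s \<in> FBL_dual \<and> (\<forall>a\<in>A. dual_le a s) \<and>
      (\<forall>u\<in>FBL_dual. (\<forall>a\<in>A. dual_le a u) \<longrightarrow> dual_le s u)"

text \<open>Ideal (solid subspace) of FBL[E]*; |\<phi>| is the supremum of {\<phi>, -\<phi>}.\<close>
definition dual_ideal :: "('a::real_normed_vector fblfun \<Rightarrow> real) set \<Rightarrow> bool" where
  "dual_ideal B \<longleftrightarrow> B \<subseteq> FBL_dual \<and> B \<noteq> {} \<and>
     (\<forall>\<phi>\<in>B. \<forall>\<psi>\<in>B. (\<lambda>f. \<phi> f + \<psi> f) \<in> B) \<and>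
     (\<forall>c::real. \<forall>\<phi>\<in>B. (\<lambda>f. c * \<phi> f) \<in> B) \<and>
     (\<forall>\<psi>\<in>B. \<forall>\<phi>\<in>FBL_dual. \<forall>m n.
        dual_is_sup {\<psi>, (\<lambda>f. - \<psi> f)} m \<and> dual_is_sup {\<phi>, (\<lambda>f. - \<phi> f)} n \<and> dual_le n m
        \<longrightarrow> \<phi> \<in> B)"

definition dual_band :: "('a::real_normed_vector fblfun \<Rightarrow> real) set \<Rightarrow> bool" where
  "dual_band B \<longleftrightarrow> dual_ideal B \<and> (\<forall>A s. A \<subseteq> B \<and> dual_is_sup A s \<longrightarrow> s \<in> B)"

definition weak_star_closed :: "('a::real_normed_vector fblfun \<Rightarrow> real) set \<Rightarrow> bool" where
  "weak_star_closed B \<longleftrightarrow> B \<subseteq> FBL_dual \<and>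
     (\<forall>\<phi>\<in>FBL_dual - B. \<exists>fs \<epsilon>. finite fs \<and> fs \<subseteq> FBL \<and> \<epsilon> > 0 \<and>
        (\<forall>\<psi>\<in>FBL_dual. (\<forall>f\<in>fs. \<bar>\<psi> f - \<phi> f\<bar> < \<epsilon>) \<longrightarrow> \<psi> \<notin> B))"

end

theory Submission
  imports Defs
begin

text \<open>Composition with the adjoints turns the isometric embedding \<open>J\<close> and the contractive
  projection \<open>P\<close> into contractive lattice homomorphisms \<open>\<hat>J : FBL[F] \<rightarrow> FBL[E]\<close> and
  \<open>\<hat>P : FBL[E] \<rightarrow> FBL[F]\<close> with \<open>\<hat>P \<hat>J = id\<close>. Hence \<open>\<hat>J\<close> is an isometric lattice embedding whose
  range is the fixed-point set of the lattice projection \<open>Q = \<hat>J \<hat>P\<close>, a closed set because FBL-norm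
  limits are pointwise limits. Dually, \<open>\<hat>P\<^sup>*\<close> is an isometric order embedding of \<open>FBL[F]\<^sup>*\<close> onto the
  \<open>Q\<close>-invariant functionals. This range is weak* closed, and it is a band: a functional dominated by
  (the modulus of) an invariant one, or the supremum of invariant ones, vanishes on the positive
  elements of the kernel of \<open>Q\<close>, hence on the whole kernel, since \<open>Q\<close> commutes with \<open>max\<close>.\<close>

section \<open>The norm of \<open>H\<^sub>0[E]\<close>\<close>

definition fbl_admissible :: "nat \<Rightarrow> (nat \<Rightarrow> 'a::real_normed_vector \<Rightarrow>\<^sub>L real) \<Rightarrow> bool" where
  "fbl_admissible n xs \<longleftrightarrow> (\<forall>x. norm x \<le> 1 \<longrightarrow> (\<Sum>k<n. \<bar>blinfun_apply (xs k) x\<bar>) \<le> 1)"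

lemma fbl_sums_iff:
  "s \<in> fbl_sums f \<longleftrightarrow> (\<exists>n xs. s = (\<Sum>k<n. \<bar>f (xs k)\<bar>) \<and> fbl_admissible n xs)"
  unfolding fbl_sums_def fbl_admissible_def by blast

lemma zero_in_fbl_sums: "0 \<in> fbl_sums f"
  unfolding fbl_sums_iff fbl_admissible_def by (rule exI[of _ 0]) auto

lemma fbl_sum_le_norm:
  assumes "f \<in> H0" "fbl_admissible n xs"
  shows "(\<Sum>k<n. \<bar>f (xs k)\<bar>) \<le> fbl_norm f"
  unfolding fbl_norm_def
  using assms unfolding H0_def by (intro cSup_upper) (auto simp: fbl_sums_iff)

lemma fbl_norm_nonneg: "f \<in> H0 \<Longrightarrow> 0 \<le> fbl_norm f"
  unfolding fbl_norm_def H0_def by (auto intro: cSup_upper zero_in_fbl_sums)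

lemma bdd_above_fbl_sums:
  assumes "\<And>n xs. fbl_admissible n xs \<Longrightarrow> (\<Sum>k<n. \<bar>f (xs k)\<bar>) \<le> C"
  shows "bdd_above (fbl_sums f)"
  using assms by (auto simp: fbl_sums_iff intro!: bdd_aboveI[of _ C])

lemma pos_homogeneous_zero:
  assumes "pos_homogeneous f" shows "f 0 = 0"
proof -
  have "f ((2::real) *\<^sub>R 0) = 2 * f 0"
    using assms unfolding pos_homogeneous_def by (metis zero_less_numeral)
  then show ?thesis by simp
qed

lemma fbl_pointwise_bound:
  assumes "f \<in> H0"
  shows "\<bar>f xs\<bar> \<le> fbl_norm f * norm xs"
proof (cases "xs = 0")
  case True
  then show ?thesis using assms pos_homogeneous_zero unfolding H0_def by auto
next
  case False
  then have np: "norm xs > 0" by simp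
  define u where "u = (1 / norm xs) *\<^sub>R xs"
  have "fbl_admissible 1 (\<lambda>_. u)"
    unfolding fbl_admissible_def
  proof (intro allI impI)
    fix x :: 'a assume "norm x \<le> 1"
    have "\<bar>blinfun_apply xs x\<bar> \<le> norm xs * norm x" using norm_blinfun[of xs x] by simp
    also have "\<dots> \<le> norm xs" using \<open>norm x \<le> 1\<close> np by (simp add: mult_left_le)
    finally have "\<bar>blinfun_apply u x\<bar> \<le> 1"
      using np by (simp add: u_def blinfun.scaleR_left abs_mult divide_le_eq)
    then show "(\<Sum>k<(1::nat). \<bar>blinfun_apply u x\<bar>) \<le> 1" by simp
  qed
  then have "\<bar>f u\<bar> \<le> fbl_norm f" using fbl_sum_le_norm[OF assms] by fastforce
  moreover have "f u = f xs / norm xs"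
    using assms np unfolding H0_def pos_homogeneous_def u_def by auto
  ultimately show ?thesis using np by (simp add: abs_div divide_le_eq)
qed

lemma H0_dominated:
  fixes h f g :: "'a::real_normed_vector fblfun"
  assumes "pos_homogeneous h" "f \<in> H0" "g \<in> H0" "a \<ge> 0" "b \<ge> 0"
    and "\<And>xs. \<bar>h xs\<bar> \<le> a * \<bar>f xs\<bar> + b * \<bar>g xs\<bar>"
  shows "h \<in> H0"
proof -
  have "bdd_above (fbl_sums h)"
  proof (rule bdd_above_fbl_sums)
    fix n and xs :: "nat \<Rightarrow> 'a \<Rightarrow>\<^sub>L real" assume adm: "fbl_admissible n xs"
    have "(\<Sum>k<n. \<bar>h (xs k)\<bar>) \<le> (\<Sum>k<n. a * \<bar>f (xs k)\<bar> + b * \<bar>g (xs k)\<bar>)"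
      by (rule sum_mono) (rule assms(6))
    also have "\<dots> = a * (\<Sum>k<n. \<bar>f (xs k)\<bar>) + b * (\<Sum>k<n. \<bar>g (xs k)\<bar>)"
      by (simp add: sum.distrib sum_distrib_left)
    also have "\<dots> \<le> a * fbl_norm f + b * fbl_norm g"
      using fbl_sum_le_norm[OF assms(2) adm] fbl_sum_le_norm[OF assms(3) adm] assms(4,5)
      by (intro add_mono mult_left_mono)
    finally show "(\<Sum>k<n. \<bar>h (xs k)\<bar>) \<le> a * fbl_norm f + b * fbl_norm g" .
  qed
  then show ?thesis using assms(1) unfolding H0_def by simp
qed

lemma H0_add: "f \<in> H0 \<Longrightarrow> g \<in> H0 \<Longrightarrow> (\<lambda>xs. f xs + g xs) \<in> H0"
  by (rule H0_dominated[where f=f and g=g and a=1 and b=1])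
    (auto simp: H0_def pos_homogeneous_def distrib_left)

lemma H0_scale: "f \<in> H0 \<Longrightarrow> (\<lambda>xs. c * f xs) \<in> H0"
  by (rule H0_dominated[where a="\<bar>c\<bar>" and b=0 and g=f])
    (auto simp: H0_def pos_homogeneous_def abs_mult)

lemma H0_max: "f \<in> H0 \<Longrightarrow> g \<in> H0 \<Longrightarrow> (\<lambda>xs. max (f xs) (g xs)) \<in> H0"
  by (rule H0_dominated[where f=f and g=g and a=1 and b=1])
    (auto simp: H0_def pos_homogeneous_def max_mult_distrib_left)

lemma H0_diff: "f \<in> H0 \<Longrightarrow> g \<in> H0 \<Longrightarrow> (\<lambda>xs. f xs - g xs) \<in> H0"
  using H0_add[OF _ H0_scale[of g "-1"], of f] by simp

lemma fbl_delta_H0: "fbl_delta (x::'a::real_normed_vector) \<in> H0"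
proof -
  have "bdd_above (fbl_sums (fbl_delta x))"
  proof (rule bdd_above_fbl_sums)
    fix n and xs :: "nat \<Rightarrow> 'a \<Rightarrow>\<^sub>L real" assume adm: "fbl_admissible n xs"
    show "(\<Sum>k<n. \<bar>fbl_delta x (xs k)\<bar>) \<le> norm x"
    proof (cases "x = 0")
      case True then show ?thesis by (simp add: fbl_delta_def)
    next
      case False
      then have np: "norm x > 0" by simp
      have "(\<Sum>k<n. \<bar>fbl_delta x (xs k)\<bar>)
          = norm x * (\<Sum>k<n. \<bar>blinfun_apply (xs k) ((1 / norm x) *\<^sub>R x)\<bar>)"
        using np by (simp add: fbl_delta_def blinfun.scaleR_right abs_mult sum_distrib_left)
      also have "\<dots> \<le> norm x"
        using adm np unfolding fbl_admissible_def by (simp add: mult_left_le)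
      finally show ?thesis .
    qed
  qed
  moreover have "pos_homogeneous (fbl_delta x)"
    unfolding pos_homogeneous_def fbl_delta_def by (simp add: blinfun.scaleR_left)
  ultimately show ?thesis unfolding H0_def by simp
qed

section \<open>The free Banach lattice\<close>

lemma FBL_least: "closed_sublattice_of H0 S \<Longrightarrow> range fbl_delta \<subseteq> S \<Longrightarrow> FBL \<subseteq> S"
  unfolding FBL_def by (rule Inter_lower) simp

lemma closed_sublattice_H0: "closed_sublattice_of H0 H0"
  unfolding closed_sublattice_of_def using fbl_delta_H0 by (blast intro: H0_add H0_scale H0_max)

lemma FBL_subset_H0: "FBL \<subseteq> H0"
  using FBL_least[OF closed_sublattice_H0] fbl_delta_H0 by blast

lemma fbl_delta_FBL: "fbl_delta x \<in> FBL"
  unfolding FBL_def by blast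

lemma FBL_add: "f \<in> FBL \<Longrightarrow> g \<in> FBL \<Longrightarrow> (\<lambda>xs. f xs + g xs) \<in> FBL"
  unfolding FBL_def closed_sublattice_of_def by blast

lemma FBL_scale: "f \<in> FBL \<Longrightarrow> (\<lambda>xs. c * f xs) \<in> FBL"
  unfolding FBL_def closed_sublattice_of_def by blast

lemma FBL_max: "f \<in> FBL \<Longrightarrow> g \<in> FBL \<Longrightarrow> (\<lambda>xs. max (f xs) (g xs)) \<in> FBL"
  unfolding FBL_def closed_sublattice_of_def by blast

lemma FBL_diff: "f \<in> FBL \<Longrightarrow> g \<in> FBL \<Longrightarrow> (\<lambda>xs. f xs - g xs) \<in> FBL"
  using FBL_add[OF _ FBL_scale[of g "-1"], of f] by simp

lemma FBL_zero: "(\<lambda>xs. 0) \<in> FBL"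
  using FBL_scale[OF fbl_delta_FBL, of 0] by simp

lemma FBL_closed:
  fixes f :: "'a::real_normed_vector fblfun"
  assumes "f \<in> H0" "\<forall>\<epsilon>>0. \<exists>g\<in>FBL. fbl_norm (\<lambda>xs. f xs - g xs) < \<epsilon>"
  shows "f \<in> FBL"
  unfolding FBL_def
proof (intro InterI, clarify)
  fix S :: "'a fblfun set" assume S: "closed_sublattice_of H0 S" "range fbl_delta \<subseteq> S"
  with assms(2) have "\<forall>\<epsilon>>0. \<exists>g\<in>S. fbl_norm (\<lambda>xs. f xs - g xs) < \<epsilon>"
    using FBL_least by blast
  with S(1) assms(1) show "f \<in> S" unfolding closed_sublattice_of_def by blast
qed

lemma fbl_norm_limit_eq:
  fixes f :: "'a::real_normed_vector fblfun"
  assumes "\<forall>\<epsilon>>0. \<exists>g\<in>S. (\<lambda>xs. f xs - g xs) \<in> H0 \<and> fbl_norm (\<lambda>xs. f xs - g xs) < \<epsilon>"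
    and "\<forall>g\<in>S. g u = g v"
  shows "f u = f v"
proof -
  have "\<bar>f u - f v\<bar> \<le> e" if "e > 0" for e
  proof -
    define N where "N = norm u + norm v + 1"
    have "N > 0" unfolding N_def using norm_ge_zero[of u] norm_ge_zero[of v] by linarith
    define \<epsilon> where "\<epsilon> = e / N"
    have "\<epsilon> > 0" using \<open>e > 0\<close> \<open>N > 0\<close> unfolding \<epsilon>_def by simp
    then obtain g where g: "g \<in> S" "(\<lambda>xs. f xs - g xs) \<in> H0" "fbl_norm (\<lambda>xs. f xs - g xs) < \<epsilon>"
      using assms(1) by blast
    have "\<bar>f w - g w\<bar> \<le> \<epsilon> * norm w" for w
    proof -
      have "\<bar>f w - g w\<bar> \<le> fbl_norm (\<lambda>xs. f xs - g xs) * norm w"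
        using fbl_pointwise_bound[OF g(2), of w] by simp
      also have "\<dots> \<le> \<epsilon> * norm w" using g(3) by (intro mult_right_mono) auto
      finally show ?thesis .
    qed
    then have "\<bar>f u - f v\<bar> \<le> \<epsilon> * (norm u + norm v)"
      using assms(2) g(1) by (smt (verit) distrib_left)
    also have "\<dots> \<le> \<epsilon> * N" using \<open>\<epsilon> > 0\<close> unfolding N_def by simp
    also have "\<dots> = e" using \<open>N > 0\<close> unfolding \<epsilon>_def by simp
    finally show ?thesis .
  qed
  then have "\<bar>f u - f v\<bar> \<le> 0" using field_le_epsilon[of "\<bar>f u - f v\<bar>" 0] by simp
  then show ?thesis by simp
qed

section \<open>Functoriality\<close>

text \<open>\<open>fbl_map A\<close> is the lattice homomorphism \<open>\<hat>A : FBL[F] \<rightarrow> FBL[E]\<close> of the paper, i.e. composition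
  with the adjoint of \<open>A : F \<rightarrow> E\<close>; it sends \<open>\<delta>\<^sub>y\<close> to \<open>\<delta>\<^bsub>A y\<^esub>\<close>.\<close>

definition fbl_map :: "('b::real_normed_vector \<Rightarrow>\<^sub>L 'a::real_normed_vector) \<Rightarrow> 'b fblfun \<Rightarrow> 'a fblfun" where
  "fbl_map A g = (\<lambda>xs. g (xs o\<^sub>L A))"

lemma fbl_map_compose: "fbl_map A (fbl_map B f) = fbl_map (A o\<^sub>L B) f"
proof -
  have "(xs o\<^sub>L A) o\<^sub>L B = xs o\<^sub>L (A o\<^sub>L B)" for xs :: "'a::real_normed_vector \<Rightarrow>\<^sub>L real"
    by (rule blinfun_eqI) simp
  then show ?thesis by (simp add: fbl_map_def)
qed

lemma fbl_map_id: "fbl_map id_blinfun f = f"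
proof -
  have "xs o\<^sub>L id_blinfun = xs" for xs :: "'a::real_normed_vector \<Rightarrow>\<^sub>L real"
    by (rule blinfun_eqI) simp
  then show ?thesis by (simp add: fbl_map_def)
qed

lemma fbl_map_add: "fbl_map A (\<lambda>xs. f xs + g xs) = (\<lambda>xs. fbl_map A f xs + fbl_map A g xs)"
  by (simp add: fbl_map_def)

lemma fbl_map_scale: "fbl_map A (\<lambda>xs. c * f xs) = (\<lambda>xs. c * fbl_map A f xs)"
  by (simp add: fbl_map_def)

lemma fbl_map_delta: "fbl_map A (fbl_delta y) = fbl_delta (blinfun_apply A y)"
  by (simp add: fbl_map_def fbl_delta_def)

lemma fbl_admissible_compose:
  fixes A :: "'b::real_normed_vector \<Rightarrow>\<^sub>L 'a::real_normed_vector"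
  assumes "norm A \<le> 1" "fbl_admissible n ys"
  shows "fbl_admissible n (\<lambda>k. ys k o\<^sub>L A)"
  unfolding fbl_admissible_def
proof (intro allI impI)
  fix x :: 'b assume "norm x \<le> 1"
  then have "norm (blinfun_apply A x) \<le> 1"
    using norm_blinfun[of A x] assms(1) by (smt (verit) mult_le_one norm_ge_zero)
  then show "(\<Sum>k<n. \<bar>blinfun_apply (ys k o\<^sub>L A) x\<bar>) \<le> 1"
    using assms(2) unfolding fbl_admissible_def by simp
qed

lemma fbl_sums_fbl_map:
  fixes A :: "'b::real_normed_vector \<Rightarrow>\<^sub>L 'a::real_normed_vector"
  assumes "norm A \<le> 1"
  shows "fbl_sums (fbl_map A f) \<subseteq> fbl_sums f"
proof
  fix s assume "s \<in> fbl_sums (fbl_map A f)"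
  then obtain n ys where "s = (\<Sum>k<n. \<bar>f (ys k o\<^sub>L A)\<bar>)" "fbl_admissible n ys"
    unfolding fbl_sums_iff fbl_map_def by blast
  then show "s \<in> fbl_sums f"
    unfolding fbl_sums_iff using fbl_admissible_compose[OF assms]
    by (intro exI[of _ n] exI[of _ "\<lambda>k. ys k o\<^sub>L A"]) simp
qed

lemma fbl_map_H0:
  fixes A :: "'b::real_normed_vector \<Rightarrow>\<^sub>L 'a::real_normed_vector"
  assumes "norm A \<le> 1" "f \<in> H0"
  shows "fbl_map A f \<in> H0"
proof -
  have "(t *\<^sub>R xs) o\<^sub>L A = t *\<^sub>R (xs o\<^sub>L A)" for t and xs :: "'a \<Rightarrow>\<^sub>L real"
    by (rule blinfun_eqI) (simp add: blinfun.scaleR_left)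
  then have "pos_homogeneous (fbl_map A f)"
    using assms(2) unfolding H0_def pos_homogeneous_def fbl_map_def by simp
  moreover have "bdd_above (fbl_sums (fbl_map A f))"
    using bdd_above_mono[OF _ fbl_sums_fbl_map[OF assms(1)]] assms(2) unfolding H0_def by auto
  ultimately show ?thesis unfolding H0_def by simp
qed

lemma fbl_norm_fbl_map_le:
  fixes A :: "'b::real_normed_vector \<Rightarrow>\<^sub>L 'a::real_normed_vector"
  assumes "norm A \<le> 1" "f \<in> H0"
  shows "fbl_norm (fbl_map A f) \<le> fbl_norm f"
  unfolding fbl_norm_def
  using zero_in_fbl_sums fbl_sums_fbl_map[OF assms(1)] assms(2) unfolding H0_def
  by (intro cSup_subset_mono) auto

lemma fbl_map_FBL:
  fixes A :: "'b::real_normed_vector \<Rightarrow>\<^sub>L 'a::real_normed_vector"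
  assumes "norm A \<le> 1" "f \<in> FBL"
  shows "fbl_map A f \<in> FBL"
proof -
  define S :: "'b fblfun set" where "S = {f \<in> H0. fbl_map A f \<in> FBL}"
  have deltas: "range fbl_delta \<subseteq> S"
    unfolding S_def by (auto simp: fbl_map_delta fbl_delta_H0 fbl_delta_FBL)
  have "closed_sublattice_of H0 S"
    unfolding closed_sublattice_of_def
  proof (intro conjI ballI allI impI)
    fix f g assume "f \<in> S" "g \<in> S"
    then show "(\<lambda>xs. f xs + g xs) \<in> S" "(\<lambda>xs. max (f xs) (g xs)) \<in> S"
      unfolding S_def using FBL_add FBL_max
      by (auto simp: fbl_map_def intro: H0_add H0_max)
  next
    fix c :: real and f assume "f \<in> S"
    then show "(\<lambda>xs. c * f xs) \<in> S"
      unfolding S_def using FBL_scale by (auto simp: fbl_map_def intro: H0_scale)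
  next
    fix f assume f: "f \<in> H0" and approx: "\<forall>\<epsilon>>0. \<exists>g\<in>S. fbl_norm (\<lambda>xs. f xs - g xs) < \<epsilon>"
    have "fbl_map A f \<in> FBL"
    proof (rule FBL_closed)
      show "fbl_map A f \<in> H0" using fbl_map_H0[OF assms(1) f] .
      show "\<forall>\<epsilon>>0. \<exists>g\<in>FBL. fbl_norm (\<lambda>xs. fbl_map A f xs - g xs) < \<epsilon>"
      proof (intro allI impI)
        fix \<epsilon> :: real assume "\<epsilon> > 0"
        then obtain g where g: "g \<in> S" "fbl_norm (\<lambda>xs. f xs - g xs) < \<epsilon>" using approx by blast
        have "fbl_norm (fbl_map A (\<lambda>xs. f xs - g xs)) \<le> fbl_norm (\<lambda>xs. f xs - g xs)"
          using g(1) f unfolding S_def by (intro fbl_norm_fbl_map_le[OF assms(1)] H0_diff) auto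
        then show "\<exists>g\<in>FBL. fbl_norm (\<lambda>xs. fbl_map A f xs - g xs) < \<epsilon>"
          using g unfolding S_def by (intro bexI[of _ "fbl_map A g"]) (auto simp: fbl_map_def)
      qed
    qed
    then show "f \<in> S" unfolding S_def using f by blast
  qed (use deltas in \<open>auto simp: S_def\<close>)
  then show ?thesis using FBL_least[OF _ deltas] assms(2) unfolding S_def by blast
qed

section \<open>The dual of the free Banach lattice\<close>

lemma FBL_dualD:
  assumes "\<phi> \<in> FBL_dual"
  shows "f \<in> FBL \<Longrightarrow> g \<in> FBL \<Longrightarrow> \<phi> (\<lambda>xs. f xs + g xs) = \<phi> f + \<phi> g"
    and "f \<in> FBL \<Longrightarrow> \<phi> (\<lambda>xs. c * f xs) = c * \<phi> f"
    and "\<exists>C. \<forall>f\<in>FBL. \<bar>\<phi> f\<bar> \<le> C * fbl_norm f"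
    and "f \<notin> FBL \<Longrightarrow> \<phi> f = 0"
  using assms unfolding FBL_dual_def by blast+

lemma FBL_dualI:
  assumes "\<And>f g. f \<in> FBL \<Longrightarrow> g \<in> FBL \<Longrightarrow> \<phi> (\<lambda>xs. f xs + g xs) = \<phi> f + \<phi> g"
    and "\<And>c f. f \<in> FBL \<Longrightarrow> \<phi> (\<lambda>xs. c * f xs) = c * \<phi> f"
    and "\<And>f. f \<in> FBL \<Longrightarrow> \<bar>\<phi> f\<bar> \<le> C * fbl_norm f"
    and "\<And>f. f \<notin> FBL \<Longrightarrow> \<phi> f = 0"
  shows "\<phi> \<in> FBL_dual"
  using assms unfolding FBL_dual_def by blast

lemma FBL_dual_zero_apply: "\<phi> \<in> FBL_dual \<Longrightarrow> \<phi> (\<lambda>xs. 0) = 0"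
  using FBL_dualD(2)[OF _ fbl_delta_FBL, of \<phi> 0] by simp

lemma FBL_dual_diff:
  assumes "\<phi> \<in> FBL_dual" "f \<in> FBL" "g \<in> FBL"
  shows "\<phi> (\<lambda>xs. f xs - g xs) = \<phi> f - \<phi> g"
  using FBL_dualD(1)[OF assms(1,2) FBL_scale[OF assms(3), of "-1"]] FBL_dualD(2)[OF assms(1,3), of "-1"]
  by simp

lemma FBL_dual_add:
  fixes \<phi> \<psi> :: "'a::real_normed_vector fblfun \<Rightarrow> real"
  assumes "\<phi> \<in> FBL_dual" "\<psi> \<in> FBL_dual"
  shows "(\<lambda>f. \<phi> f + \<psi> f) \<in> FBL_dual"
proof -
  obtain C1 C2 where C: "\<forall>f\<in>FBL. \<bar>\<phi> f\<bar> \<le> C1 * fbl_norm f" "\<forall>f\<in>FBL. \<bar>\<psi> f\<bar> \<le> C2 * fbl_norm f"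
    using FBL_dualD(3)[OF assms(1)] FBL_dualD(3)[OF assms(2)] by blast
  show ?thesis
  proof (rule FBL_dualI[where C="C1 + C2"])
    fix f :: "'a fblfun" assume "f \<in> FBL"
    have "\<bar>\<phi> f + \<psi> f\<bar> \<le> \<bar>\<phi> f\<bar> + \<bar>\<psi> f\<bar>" by (rule abs_triangle_ineq)
    also have "\<dots> \<le> (C1 + C2) * fbl_norm f"
      using C \<open>f \<in> FBL\<close> by (simp add: distrib_right add_mono)
    finally show "\<bar>\<phi> f + \<psi> f\<bar> \<le> (C1 + C2) * fbl_norm f" .
  qed (simp_all add: FBL_dualD[OF assms(1)] FBL_dualD[OF assms(2)] algebra_simps)
qed

lemma FBL_dual_scale:
  fixes \<phi> :: "'a::real_normed_vector fblfun \<Rightarrow> real"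
  assumes "\<phi> \<in> FBL_dual"
  shows "(\<lambda>f. c * \<phi> f) \<in> FBL_dual"
proof -
  obtain C where C: "\<forall>f\<in>FBL. \<bar>\<phi> f\<bar> \<le> C * fbl_norm f" using FBL_dualD(3)[OF assms] by blast
  show ?thesis
  proof (rule FBL_dualI[where C="\<bar>c\<bar> * C"])
    fix f :: "'a fblfun" assume "f \<in> FBL"
    then show "\<bar>c * \<phi> f\<bar> \<le> \<bar>c\<bar> * C * fbl_norm f"
      using C by (simp add: abs_mult mult.assoc mult_left_mono)
  qed (simp_all add: FBL_dualD[OF assms] algebra_simps)
qed

lemma FBL_dual_zero: "(\<lambda>f. 0) \<in> FBL_dual"
  by (rule FBL_dualI[where C=0]) auto

lemma dual_leD: "dual_le \<phi> \<psi> \<Longrightarrow> f \<in> FBL \<Longrightarrow> \<forall>xs. 0 \<le> f xs \<Longrightarrow> \<phi> f \<le> \<psi> f"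
  unfolding dual_le_def by blast

text \<open>The adjoint \<open>(\<hat>A)\<^sup>*\<close>, normalised to vanish outside \<open>FBL\<close> like the elements of \<open>FBL_dual\<close>.\<close>

definition fbl_dual_map ::
    "('a::real_normed_vector \<Rightarrow>\<^sub>L 'b::real_normed_vector) \<Rightarrow> ('b fblfun \<Rightarrow> real) \<Rightarrow> ('a fblfun \<Rightarrow> real)" where
  "fbl_dual_map A \<phi> = (\<lambda>f. if f \<in> FBL then \<phi> (fbl_map A f) else 0)"

lemma fbl_dual_map_apply: "f \<in> FBL \<Longrightarrow> fbl_dual_map A \<phi> f = \<phi> (fbl_map A f)"
  by (simp add: fbl_dual_map_def)

lemma fbl_dual_map_add: "fbl_dual_map A (\<lambda>f. \<phi> f + \<psi> f) = (\<lambda>f. fbl_dual_map A \<phi> f + fbl_dual_map A \<psi> f)"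
  by (auto simp: fbl_dual_map_def)

lemma fbl_dual_map_scale: "fbl_dual_map A (\<lambda>f. c * \<phi> f) = (\<lambda>f. c * fbl_dual_map A \<phi> f)"
  by (auto simp: fbl_dual_map_def)

lemma fbl_dual_map_FBL_dual:
  fixes A :: "'a::real_normed_vector \<Rightarrow>\<^sub>L 'b::real_normed_vector"
  assumes "norm A \<le> 1" "\<phi> \<in> FBL_dual"
  shows "fbl_dual_map A \<phi> \<in> FBL_dual"
proof -
  obtain C where C: "\<forall>f\<in>FBL. \<bar>\<phi> f\<bar> \<le> C * fbl_norm f" using FBL_dualD(3)[OF assms(2)] by blast
  show ?thesis
  proof (rule FBL_dualI[where C="max C 0"])
    fix f :: "'a fblfun" assume f: "f \<in> FBL"
    then have H0: "f \<in> H0" "fbl_map A f \<in> H0"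
      using FBL_subset_H0 fbl_map_H0[OF assms(1)] by auto
    have "\<bar>\<phi> (fbl_map A f)\<bar> \<le> C * fbl_norm (fbl_map A f)"
      using C fbl_map_FBL[OF assms(1) f] by blast
    also have "\<dots> \<le> max C 0 * fbl_norm (fbl_map A f)"
      using fbl_norm_nonneg[OF H0(2)] by (simp add: mult_right_mono)
    also have "\<dots> \<le> max C 0 * fbl_norm f"
      using fbl_norm_fbl_map_le[OF assms(1) H0(1)] by (simp add: mult_left_mono)
    finally show "\<bar>fbl_dual_map A \<phi> f\<bar> \<le> max C 0 * fbl_norm f"
      using f by (simp add: fbl_dual_map_apply)
  next
    fix f g :: "'a fblfun" assume "f \<in> FBL" "g \<in> FBL"
    then show "fbl_dual_map A \<phi> (\<lambda>xs. f xs + g xs) = fbl_dual_map A \<phi> f + fbl_dual_map A \<phi> g"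
      using FBL_dualD(1)[OF assms(2) fbl_map_FBL[OF assms(1)] fbl_map_FBL[OF assms(1)]]
      by (simp add: fbl_dual_map_apply FBL_add fbl_map_add)
  next
    fix c and f :: "'a fblfun" assume "f \<in> FBL"
    then show "fbl_dual_map A \<phi> (\<lambda>xs. c * f xs) = c * fbl_dual_map A \<phi> f"
      using FBL_dualD(2)[OF assms(2) fbl_map_FBL[OF assms(1)]]
      by (simp add: fbl_dual_map_apply FBL_scale fbl_map_scale)
  qed (simp add: fbl_dual_map_def)
qed

section \<open>Retractions\<close>

locale fbl_retraction =
  fixes A :: "'b::real_normed_vector \<Rightarrow>\<^sub>L 'a::real_normed_vector" and B :: "'a \<Rightarrow>\<^sub>L 'b"
  assumes norm_A: "norm A \<le> 1" and norm_B: "norm B \<le> 1" and B_A: "B o\<^sub>L A = id_blinfun"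
begin

lemma fbl_map_B_A [simp]: "fbl_map B (fbl_map A g) = g"
  by (simp add: fbl_map_compose B_A fbl_map_id)

definition fbl_proj :: "'a fblfun \<Rightarrow> 'a fblfun" where
  "fbl_proj f = fbl_map A (fbl_map B f)"

lemma fbl_proj_apply: "fbl_proj f xs = f ((xs o\<^sub>L A) o\<^sub>L B)"
  by (simp add: fbl_proj_def fbl_map_def)

lemma fbl_proj_FBL: "f \<in> FBL \<Longrightarrow> fbl_proj f \<in> FBL"
  unfolding fbl_proj_def by (intro fbl_map_FBL norm_A norm_B)

lemma fbl_proj_fbl_map_A [simp]: "fbl_proj (fbl_map A g) = fbl_map A g"
  by (simp add: fbl_proj_def)

lemma fbl_map_B_fbl_proj [simp]: "fbl_map B (fbl_proj f) = fbl_map B f"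
  by (simp add: fbl_proj_def)

lemma fbl_proj_idem [simp]: "fbl_proj (fbl_proj f) = fbl_proj f"
  by (simp add: fbl_proj_def)

lemma fbl_proj_nonneg: "\<forall>xs. 0 \<le> f xs \<Longrightarrow> 0 \<le> fbl_proj f xs"
  by (simp add: fbl_proj_apply)

lemma norm_fbl_map_A: "g \<in> H0 \<Longrightarrow> fbl_norm (fbl_map A g) = fbl_norm g"
  using fbl_norm_fbl_map_le[OF norm_A, of g] fbl_norm_fbl_map_le[OF norm_B fbl_map_H0[OF norm_A]]
  by fastforce

lemma fbl_map_A_le_iff: "(\<forall>xs. fbl_map A f xs \<le> fbl_map A g xs) \<longleftrightarrow> (\<forall>xs. f xs \<le> g xs)"
  by (metis fbl_map_B_A fbl_map_def)

lemma closed_sublattice_image_fbl_map_A: "closed_sublattice_of FBL (fbl_map A ` FBL)"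
  unfolding closed_sublattice_of_def
proof (intro conjI ballI allI impI)
  show "fbl_map A ` FBL \<subseteq> FBL" using fbl_map_FBL[OF norm_A] by blast
  show "fbl_map A ` FBL \<noteq> {}" using fbl_delta_FBL by blast
next
  fix f g assume "f \<in> fbl_map A ` FBL" "g \<in> fbl_map A ` FBL"
  then obtain f' g' where fg: "f' \<in> FBL" "g' \<in> FBL" "f = fbl_map A f'" "g = fbl_map A g'" by blast
  have "(\<lambda>xs. f xs + g xs) = fbl_map A (\<lambda>xs. f' xs + g' xs)"
    "(\<lambda>xs. max (f xs) (g xs)) = fbl_map A (\<lambda>xs. max (f' xs) (g' xs))"
    using fg(3,4) by (simp_all add: fbl_map_def)
  then show "(\<lambda>xs. f xs + g xs) \<in> fbl_map A ` FBL" "(\<lambda>xs. max (f xs) (g xs)) \<in> fbl_map A ` FBL"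
    using imageI[OF FBL_add[OF fg(1,2)]] imageI[OF FBL_max[OF fg(1,2)]] by simp_all
next
  fix c :: real and f assume "f \<in> fbl_map A ` FBL"
  then obtain f' where f': "f' \<in> FBL" "f = fbl_map A f'" by blast
  then have "(\<lambda>xs. c * f xs) = fbl_map A (\<lambda>xs. c * f' xs)" by (simp add: fbl_map_def)
  then show "(\<lambda>xs. c * f xs) \<in> fbl_map A ` FBL" using imageI[OF FBL_scale[OF f'(1)]] by simp
next
  fix f assume f: "f \<in> FBL" and approx: "\<forall>\<epsilon>>0. \<exists>g\<in>fbl_map A ` FBL. fbl_norm (\<lambda>xs. f xs - g xs) < \<epsilon>"
  have "f ((xs o\<^sub>L A) o\<^sub>L B) = f xs" for xs
  proof (rule fbl_norm_limit_eq)
    show "\<forall>\<epsilon>>0. \<exists>g\<in>fbl_map A ` FBL. (\<lambda>xs. f xs - g xs) \<in> H0 \<and> fbl_norm (\<lambda>xs. f xs - g xs) < \<epsilon>"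
      using approx f fbl_map_FBL[OF norm_A] FBL_diff FBL_subset_H0 by blast
    show "\<forall>g\<in>fbl_map A ` FBL. g ((xs o\<^sub>L A) o\<^sub>L B) = g xs"
    proof
      fix g assume "g \<in> fbl_map A ` FBL"
      then have "fbl_proj g = g" by auto
      then show "g ((xs o\<^sub>L A) o\<^sub>L B) = g xs" by (metis fbl_proj_apply)
    qed
  qed
  then have "f = fbl_proj f" by (simp add: fun_eq_iff fbl_proj_apply)
  then show "f \<in> fbl_map A ` FBL" using fbl_map_FBL[OF norm_B f] unfolding fbl_proj_def by blast
qed

lemma fbl_dual_map_B_FBL_dual: "\<phi> \<in> FBL_dual \<Longrightarrow> fbl_dual_map B \<phi> \<in> FBL_dual"
  by (rule fbl_dual_map_FBL_dual[OF norm_B])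

lemma fbl_dual_map_B_A_apply: "f \<in> FBL \<Longrightarrow> fbl_dual_map B (fbl_dual_map A \<xi>) f = \<xi> (fbl_proj f)"
  by (simp add: fbl_dual_map_apply fbl_map_FBL[OF norm_B] fbl_proj_def)

definition proj_invariant :: "('a fblfun \<Rightarrow> real) \<Rightarrow> bool" where
  "proj_invariant \<xi> \<longleftrightarrow> (\<forall>f\<in>FBL. \<xi> (fbl_proj f) = \<xi> f)"

lemma range_fbl_dual_map_B:
  "\<xi> \<in> fbl_dual_map B ` FBL_dual \<longleftrightarrow> \<xi> \<in> FBL_dual \<and> proj_invariant \<xi>"
proof
  assume "\<xi> \<in> fbl_dual_map B ` FBL_dual"
  then obtain \<phi> where "\<phi> \<in> FBL_dual" "\<xi> = fbl_dual_map B \<phi>" by blast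
  then show "\<xi> \<in> FBL_dual \<and> proj_invariant \<xi>"
    unfolding proj_invariant_def
    by (simp add: fbl_dual_map_B_FBL_dual fbl_dual_map_apply fbl_proj_FBL)
next
  assume \<xi>: "\<xi> \<in> FBL_dual \<and> proj_invariant \<xi>"
  have "fbl_dual_map B (fbl_dual_map A \<xi>) = \<xi>"
  proof
    fix f show "fbl_dual_map B (fbl_dual_map A \<xi>) f = \<xi> f"
      using \<xi> FBL_dualD(4)[of \<xi> f] unfolding proj_invariant_def
      by (cases "f \<in> FBL") (simp_all add: fbl_dual_map_B_A_apply, simp add: fbl_dual_map_def)
  qed
  then show "\<xi> \<in> fbl_dual_map B ` FBL_dual"
    using fbl_dual_map_FBL_dual[OF norm_A] \<xi> by (metis image_eqI)
qed

text \<open>\<open>f - fbl_proj f\<close> lies in the kernel of the projection, and so do its positive and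
  negative parts.\<close>

lemma proj_invariant_if_kernel:
  assumes \<xi>: "\<xi> \<in> FBL_dual"
    and ker: "\<And>f. f \<in> FBL \<Longrightarrow> \<forall>xs. 0 \<le> f xs \<Longrightarrow> fbl_proj f = (\<lambda>xs. 0) \<Longrightarrow> \<xi> f = 0"
  shows "proj_invariant \<xi>"
  unfolding proj_invariant_def
proof
  fix f :: "'a fblfun" assume f: "f \<in> FBL"
  define g where "g = (\<lambda>xs. f xs - fbl_proj f xs)"
  define g\<^sub>p where "g\<^sub>p = (\<lambda>xs. max (g xs) 0)"
  define g\<^sub>n where "g\<^sub>n = (\<lambda>xs. max (- g xs) 0)"
  have g: "g \<in> FBL" unfolding g_def using f by (intro FBL_diff fbl_proj_FBL)
  have "fbl_proj g = (\<lambda>xs. 0)"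
    using fbl_proj_idem[of f] unfolding g_def fbl_proj_def fbl_map_def by (metis diff_self)
  then have proj_parts: "fbl_proj g\<^sub>p = (\<lambda>xs. 0)" "fbl_proj g\<^sub>n = (\<lambda>xs. 0)"
    unfolding g\<^sub>p_def g\<^sub>n_def fbl_proj_def fbl_map_def by (simp_all add: fun_eq_iff)
  have parts: "g\<^sub>p \<in> FBL" "g\<^sub>n \<in> FBL"
    unfolding g\<^sub>p_def g\<^sub>n_def using FBL_max[OF g FBL_zero] FBL_max[OF FBL_scale[OF g, of "-1"] FBL_zero]
    by simp_all
  have "(\<lambda>xs. g\<^sub>p xs - g\<^sub>n xs) = g" unfolding g\<^sub>p_def g\<^sub>n_def by (auto simp: max_def)
  then have "\<xi> g = \<xi> g\<^sub>p - \<xi> g\<^sub>n" using FBL_dual_diff[OF \<xi> parts] by simp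
  also have "\<dots> = 0"
    using ker[OF parts(1)] ker[OF parts(2)] proj_parts unfolding g\<^sub>p_def g\<^sub>n_def by simp
  finally show "\<xi> (fbl_proj f) = \<xi> f"
    using FBL_dual_diff[OF \<xi> f fbl_proj_FBL[OF f]] unfolding g_def by simp
qed

lemma dual_le_fbl_dual_map_B_A:
  assumes "proj_invariant \<xi>" "dual_le \<xi> m"
  shows "dual_le \<xi> (fbl_dual_map B (fbl_dual_map A m))"
  unfolding dual_le_def
proof (intro ballI impI)
  fix f :: "'a fblfun" assume f: "f \<in> FBL" "\<forall>xs. 0 \<le> f xs"
  then have "\<xi> (fbl_proj f) \<le> m (fbl_proj f)"
    using assms(2) fbl_proj_FBL fbl_proj_nonneg unfolding dual_le_def by blast
  then show "\<xi> f \<le> fbl_dual_map B (fbl_dual_map A m) f"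
    using assms(1) f(1) unfolding proj_invariant_def by (simp add: fbl_dual_map_B_A_apply)
qed

lemma fbl_dual_map_B_A_kernel:
  "m \<in> FBL_dual \<Longrightarrow> f \<in> FBL \<Longrightarrow> fbl_proj f = (\<lambda>xs. 0) \<Longrightarrow> fbl_dual_map B (fbl_dual_map A m) f = 0"
  by (simp add: fbl_dual_map_B_A_apply FBL_dual_zero_apply)


lemma dual_norm_fbl_dual_map_B: "dual_norm (fbl_dual_map B \<phi>) = dual_norm \<phi>"
proof -
  have "{\<bar>fbl_dual_map B \<phi> f\<bar> | f. f \<in> FBL \<and> fbl_norm f \<le> 1} = {\<bar>\<phi> g\<bar> | g. g \<in> FBL \<and> fbl_norm g \<le> 1}"
  proof safe
    fix f :: "'a fblfun" assume f: "f \<in> FBL" "fbl_norm f \<le> 1"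
    then have "fbl_norm (fbl_map B f) \<le> 1"
      using fbl_norm_fbl_map_le[OF norm_B, of f] FBL_subset_H0 by fastforce
    then show "\<exists>g. \<bar>fbl_dual_map B \<phi> f\<bar> = \<bar>\<phi> g\<bar> \<and> g \<in> FBL \<and> fbl_norm g \<le> 1"
      using fbl_map_FBL[OF norm_B f(1)] f(1) by (auto simp: fbl_dual_map_apply)
  next
    fix g :: "'b fblfun" assume g: "g \<in> FBL" "fbl_norm g \<le> 1"
    then show "\<exists>f. \<bar>\<phi> g\<bar> = \<bar>fbl_dual_map B \<phi> f\<bar> \<and> f \<in> FBL \<and> fbl_norm f \<le> 1"
      using fbl_map_FBL[OF norm_A g(1)] norm_fbl_map_A[of g] FBL_subset_H0
      by (intro exI[of _ "fbl_map A g"]) (auto simp: fbl_dual_map_apply)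
  qed
  then show ?thesis unfolding dual_norm_def by simp
qed

lemma dual_le_fbl_dual_map_B_iff:
  "dual_le (fbl_dual_map B \<phi>) (fbl_dual_map B \<psi>) \<longleftrightarrow> dual_le \<phi> \<psi>"
proof
  assume le: "dual_le (fbl_dual_map B \<phi>) (fbl_dual_map B \<psi>)"
  show "dual_le \<phi> \<psi>" unfolding dual_le_def
  proof (intro ballI impI)
    fix g :: "'b fblfun" assume g: "g \<in> FBL" "\<forall>xs. 0 \<le> g xs"
    then have "fbl_dual_map B \<phi> (fbl_map A g) \<le> fbl_dual_map B \<psi> (fbl_map A g)"
      using fbl_map_FBL[OF norm_A] by (intro dual_leD[OF le]) (auto simp: fbl_map_def)
    then show "\<phi> g \<le> \<psi> g" using fbl_map_FBL[OF norm_A g(1)] by (simp add: fbl_dual_map_apply)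
  qed
next
  assume "dual_le \<phi> \<psi>"
  then show "dual_le (fbl_dual_map B \<phi>) (fbl_dual_map B \<psi>)"
    unfolding dual_le_def using fbl_map_FBL[OF norm_B] by (auto simp: fbl_dual_map_apply fbl_map_def)
qed

lemma dual_ideal_range_fbl_dual_map_B: "dual_ideal (fbl_dual_map B ` FBL_dual)"
  unfolding dual_ideal_def
proof (intro conjI ballI allI impI)
  show "fbl_dual_map B ` FBL_dual \<subseteq> FBL_dual" using fbl_dual_map_B_FBL_dual by blast
  show "fbl_dual_map B ` FBL_dual \<noteq> {}" using FBL_dual_zero by blast
next
  fix \<xi> \<eta> assume "\<xi> \<in> fbl_dual_map B ` FBL_dual" "\<eta> \<in> fbl_dual_map B ` FBL_dual"
  then obtain \<phi> \<psi> where "\<phi> \<in> FBL_dual" "\<psi> \<in> FBL_dual" "\<xi> = fbl_dual_map B \<phi>" "\<eta> = fbl_dual_map B \<psi>"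
    by blast
  then show "(\<lambda>f. \<xi> f + \<eta> f) \<in> fbl_dual_map B ` FBL_dual"
    using imageI[OF FBL_dual_add] by (simp add: fbl_dual_map_add[symmetric])
next
  fix c :: real and \<xi> assume "\<xi> \<in> fbl_dual_map B ` FBL_dual"
  then obtain \<phi> where "\<phi> \<in> FBL_dual" "\<xi> = fbl_dual_map B \<phi>" by blast
  then show "(\<lambda>f. c * \<xi> f) \<in> fbl_dual_map B ` FBL_dual"
    using imageI[OF FBL_dual_scale] by (simp add: fbl_dual_map_scale[symmetric])
next
  fix \<psi> \<phi> m n
  assume \<psi>: "\<psi> \<in> fbl_dual_map B ` FBL_dual" and \<phi>: "\<phi> \<in> FBL_dual"
    and mn: "dual_is_sup {\<psi>, \<lambda>f. - \<psi> f} m \<and> dual_is_sup {\<phi>, \<lambda>f. - \<phi> f} n \<and> dual_le n m"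
  define m' where "m' = fbl_dual_map B (fbl_dual_map A m)"
  have m: "m \<in> FBL_dual" using mn unfolding dual_is_sup_def by blast
  have inv: "proj_invariant \<psi>" "proj_invariant (\<lambda>f. - \<psi> f)"
    using \<psi> unfolding range_fbl_dual_map_B proj_invariant_def by auto
  have "dual_le \<psi> m" "dual_le (\<lambda>f. - \<psi> f) m" using mn unfolding dual_is_sup_def by auto
  then have "dual_le \<psi> m'" "dual_le (\<lambda>f. - \<psi> f) m'"
    unfolding m'_def using inv by (auto intro: dual_le_fbl_dual_map_B_A)
  moreover have "m' \<in> FBL_dual"
    unfolding m'_def by (intro fbl_dual_map_B_FBL_dual fbl_dual_map_FBL_dual[OF norm_A] m)
  ultimately have m_m': "dual_le m m'" using mn unfolding dual_is_sup_def by blast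
  have "proj_invariant \<phi>"
  proof (rule proj_invariant_if_kernel[OF \<phi>])
    fix f :: "'a fblfun" assume f: "f \<in> FBL" "\<forall>xs. 0 \<le> f xs" and ker: "fbl_proj f = (\<lambda>xs. 0)"
    have "n f \<le> m f" using mn dual_leD[OF _ f] by blast
    also have "\<dots> \<le> m' f" by (rule dual_leD[OF m_m' f])
    also have "m' f = 0" unfolding m'_def using fbl_dual_map_B_A_kernel[OF m f(1) ker] .
    finally have "n f \<le> 0" .
    moreover have "\<phi> f \<le> n f" "- \<phi> f \<le> n f"
      using mn dual_leD[OF _ f] unfolding dual_is_sup_def by blast+
    ultimately show "\<phi> f = 0" by linarith
  qed
  then show "\<phi> \<in> fbl_dual_map B ` FBL_dual" using \<phi> range_fbl_dual_map_B by blast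
qed

lemma dual_band_range_fbl_dual_map_B: "dual_band (fbl_dual_map B ` FBL_dual)"
  unfolding dual_band_def
proof (intro conjI allI impI)
  show "dual_ideal (fbl_dual_map B ` FBL_dual)" by (rule dual_ideal_range_fbl_dual_map_B)
  fix As s assume asm: "As \<subseteq> fbl_dual_map B ` FBL_dual \<and> dual_is_sup As s"
  then have As: "a \<in> FBL_dual \<and> proj_invariant a" if "a \<in> As" for a
    using that range_fbl_dual_map_B by blast
  from asm have s: "s \<in> FBL_dual" "\<And>a. a \<in> As \<Longrightarrow> dual_le a s"
      "\<And>u. u \<in> FBL_dual \<Longrightarrow> \<forall>a\<in>As. dual_le a u \<Longrightarrow> dual_le s u"
    unfolding dual_is_sup_def by blast+
  define s' where "s' = fbl_dual_map B (fbl_dual_map A s)"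
  have "s' \<in> FBL_dual"
    unfolding s'_def by (intro fbl_dual_map_B_FBL_dual fbl_dual_map_FBL_dual[OF norm_A] s(1))
  moreover have "\<forall>a\<in>As. dual_le a s'"
    unfolding s'_def using As s(2) by (blast intro: dual_le_fbl_dual_map_B_A)
  ultimately have s_s': "dual_le s s'" by (rule s(3))
  have "proj_invariant s"
  proof (rule proj_invariant_if_kernel[OF s(1)])
    fix f :: "'a fblfun" assume f: "f \<in> FBL" "\<forall>xs. 0 \<le> f xs" and ker: "fbl_proj f = (\<lambda>xs. 0)"
    have "s f \<le> s' f" by (rule dual_leD[OF s_s' f])
    also have "s' f = 0" unfolding s'_def using fbl_dual_map_B_A_kernel[OF s(1) f(1) ker] .
    finally have "s f \<le> 0" .
    moreover have "0 \<le> s f"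
    proof (cases "As = {}")
      case True
      then have "dual_le s (\<lambda>f. 2 * s f)" by (intro s(3) FBL_dual_scale s(1)) simp
      then show ?thesis using dual_leD[OF _ f(1,2)] by fastforce
    next
      case False
      then obtain a where a: "a \<in> As" by blast
      then have "a f = a (fbl_proj f)" using As[OF a] f(1) unfolding proj_invariant_def by simp
      also have "\<dots> = 0" using As[OF a] ker FBL_dual_zero_apply by auto
      finally show ?thesis using dual_leD[OF s(2)[OF a] f] by simp
    qed
    ultimately show "s f = 0" by simp
  qed
  then show "s \<in> fbl_dual_map B ` FBL_dual" using s(1) range_fbl_dual_map_B by blast
qed

lemma weak_star_closed_range_fbl_dual_map_B: "weak_star_closed (fbl_dual_map B ` FBL_dual)"
  unfolding weak_star_closed_def
proof (intro conjI ballI)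
  show "fbl_dual_map B ` FBL_dual \<subseteq> FBL_dual" using fbl_dual_map_B_FBL_dual by blast
  fix \<xi> assume "\<xi> \<in> FBL_dual - fbl_dual_map B ` FBL_dual"
  then have "\<not> proj_invariant \<xi>" using range_fbl_dual_map_B by blast
  then obtain f where f: "f \<in> FBL" "\<xi> (fbl_proj f) \<noteq> \<xi> f"
    unfolding proj_invariant_def by blast
  define d where "d = \<bar>\<xi> (fbl_proj f) - \<xi> f\<bar> / 2"
  have "d > 0" using f(2) unfolding d_def by simp
  moreover have "\<psi> \<notin> fbl_dual_map B ` FBL_dual"
    if "\<forall>g\<in>{f, fbl_proj f}. \<bar>\<psi> g - \<xi> g\<bar> < d" for \<psi>
  proof
    assume "\<psi> \<in> fbl_dual_map B ` FBL_dual"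
    then have "\<psi> (fbl_proj f) = \<psi> f" using f(1) unfolding range_fbl_dual_map_B proj_invariant_def by blast
    then show False using that unfolding d_def by (auto simp: abs_if split: if_splits)
  qed
  ultimately show "\<exists>fs \<epsilon>. finite fs \<and> fs \<subseteq> FBL \<and> \<epsilon> > 0 \<and>
      (\<forall>\<psi>\<in>FBL_dual. (\<forall>g\<in>fs. \<bar>\<psi> g - \<xi> g\<bar> < \<epsilon>) \<longrightarrow> \<psi> \<notin> fbl_dual_map B ` FBL_dual)"
    using f(1) fbl_proj_FBL by (intro exI[of _ "{f, fbl_proj f}"] exI[of _ d]) auto
qed

end

theorem corollary2p7:
  fixes J :: "'b::banach \<Rightarrow> 'a::banach" and P :: "'a \<Rightarrow> 'b"
  assumes "linear J" and "\<And>y. norm (J y) = norm y"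
    and "bounded_linear P" and "\<And>y. P (J y) = y" and "onorm P \<le> 1"
  shows "(\<exists>T :: 'b fblfun \<Rightarrow> 'a fblfun.
            (\<forall>f\<in>FBL. T f \<in> FBL) \<and>
            (\<forall>f\<in>FBL. \<forall>g\<in>FBL. T (\<lambda>xs. f xs + g xs) = (\<lambda>xs. T f xs + T g xs)) \<and>
            (\<forall>c. \<forall>f\<in>FBL. T (\<lambda>xs. c * f xs) = (\<lambda>xs. c * T f xs)) \<and>
            (\<forall>f\<in>FBL. fbl_norm (T f) = fbl_norm f) \<and>
            (\<forall>f\<in>FBL. \<forall>g\<in>FBL. (\<forall>xs. f xs \<le> g xs) \<longleftrightarrow> (\<forall>xs. T f xs \<le> T g xs)) \<and>
            closed_sublattice_of FBL (T ` FBL))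
       \<and> (\<exists>S :: ('b fblfun \<Rightarrow> real) \<Rightarrow> ('a fblfun \<Rightarrow> real).
            (\<forall>\<phi>\<in>FBL_dual. S \<phi> \<in> FBL_dual) \<and>
            (\<forall>\<phi>\<in>FBL_dual. \<forall>\<psi>\<in>FBL_dual. S (\<lambda>f. \<phi> f + \<psi> f) = (\<lambda>f. S \<phi> f + S \<psi> f)) \<and>
            (\<forall>c. \<forall>\<phi>\<in>FBL_dual. S (\<lambda>f. c * \<phi> f) = (\<lambda>f. c * S \<phi> f)) \<and>
            (\<forall>\<phi>\<in>FBL_dual. dual_norm (S \<phi>) = dual_norm \<phi>) \<and>
            (\<forall>\<phi>\<in>FBL_dual. \<forall>\<psi>\<in>FBL_dual. dual_le \<phi> \<psi> \<longleftrightarrow> dual_le (S \<phi>) (S \<psi>)) \<and>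
            dual_band (S ` FBL_dual) \<and> weak_star_closed (S ` FBL_dual))"
proof -
  have J: "bounded_linear J"
    by (rule bounded_linear_intro[where K=1]) (auto simp: linear_add linear_scale assms(1,2))
  interpret fbl_retraction "Blinfun J" "Blinfun P"
  proof
    show "norm (Blinfun J) \<le> 1"
      by (rule norm_blinfun_bound) (simp_all add: bounded_linear_Blinfun_apply[OF J] assms(2))
    show "norm (Blinfun P) \<le> 1"
      using assms(5) by (simp add: norm_blinfun.rep_eq bounded_linear_Blinfun_apply[OF assms(3)])
    show "Blinfun P o\<^sub>L Blinfun J = id_blinfun"
      by (rule blinfun_eqI) (simp add: bounded_linear_Blinfun_apply J assms(3,4))
  qed
  show ?thesis
    using fbl_map_FBL[OF norm_A] norm_fbl_map_A FBL_subset_H0 fbl_map_A_le_iff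
      closed_sublattice_image_fbl_map_A fbl_dual_map_B_FBL_dual dual_norm_fbl_dual_map_B
      dual_le_fbl_dual_map_B_iff dual_band_range_fbl_dual_map_B weak_star_closed_range_fbl_dual_map_B
    by (intro conjI exI[of _ "fbl_map (Blinfun J)"] exI[of _ "fbl_dual_map (Blinfun P)"])
      (auto simp: fbl_map_add fbl_map_scale fbl_dual_map_add fbl_dual_map_scale)
qed

end
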